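(* Let $\Omega=\mathbb N$, $\Sigma=2^{\mathbb N}$ and $\mu$ a finite measure with $\mu(\{n\})>0$ for all $n$. Let $X(\mu)$ be a Banach rectangular sequence space containing every canonical sequence $e_n$ ($e_n(k)=1$ if $k=n$ and $0$ otherwise), and let $X_0$ be the closure in $X(\mu)$ of $\operatorname{span}\{e_n:n\in\mathbb N\}$. Then $\{e_n\}$ is an unconditional basis for $X_0$.
   Context: A Banach rectangular sequence space is a vector space $X(\mu)$ of real sequences with a complete norm such that for some $C>0$, $\chi_Af\in X(\mu)$ and $\|\chi_Af\|\le C\|f\|$ for all $f\in X(\mu)$, $A\subseteq\mathbb N$. An unconditional basis of $X_0$ is a Schauder basis $\{x_n\}$ (each $x\in X_0$ is uniquely $\sum a_nx_n$) such that for each $x=\sum a_nx_n$ the series $\sum a_{\pi(n)}x_{\pi(n)}$ converges for every permutation $\pi$ of $\mathbb N$. *)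

theory Defs
  imports "HOL-Analysis.Analysis"
begin

text \<open>Sequences are functions nat \<Rightarrow> real; a sequence space is a set X of
sequences together with a function N (the norm), meaningful on X.\<close>

definition normed_seq_space :: "(nat \<Rightarrow> real) set \<Rightarrow> ((nat \<Rightarrow> real) \<Rightarrow> real) \<Rightarrow> bool" where
  "normed_seq_space X N \<longleftrightarrow>
     (\<lambda>k. 0) \<in> X \<and>
     (\<forall>f\<in>X. \<forall>g\<in>X. (\<lambda>k. f k + g k) \<in> X) \<and>
     (\<forall>f\<in>X. \<forall>c::real. (\<lambda>k. c * f k) \<in> X) \<and>
     (\<forall>f\<in>X. 0 \<le> N f \<and> (N f = 0 \<longleftrightarrow> f = (\<lambda>k. 0))) \<and>
     (\<forall>f\<in>X. \<forall>c::real. N (\<lambda>k. c * f k) = \<bar>c\<bar> * N f) \<and>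
     (\<forall>f\<in>X. \<forall>g\<in>X. N (\<lambda>k. f k + g k) \<le> N f + N g)"

definition norm_conv :: "((nat \<Rightarrow> real) \<Rightarrow> real) \<Rightarrow> (nat \<Rightarrow> nat \<Rightarrow> real) \<Rightarrow> (nat \<Rightarrow> real) \<Rightarrow> bool" where
  "norm_conv N s x \<longleftrightarrow> (\<lambda>m. N (\<lambda>k. s m k - x k)) \<longlonglongrightarrow> 0"

definition complete_seq_space :: "(nat \<Rightarrow> real) set \<Rightarrow> ((nat \<Rightarrow> real) \<Rightarrow> real) \<Rightarrow> bool" where
  "complete_seq_space X N \<longleftrightarrow>
     (\<forall>s. (\<forall>m. s m \<in> X) \<and>
          (\<forall>e>0. \<exists>M. \<forall>m\<ge>M. \<forall>n\<ge>M. N (\<lambda>k. s m k - s n k) < e)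
        \<longrightarrow> (\<exists>x\<in>X. norm_conv N s x))"

definition banach_rectangular_seq_space :: "(nat \<Rightarrow> real) set \<Rightarrow> ((nat \<Rightarrow> real) \<Rightarrow> real) \<Rightarrow> bool" where
  "banach_rectangular_seq_space X N \<longleftrightarrow>
     normed_seq_space X N \<and> complete_seq_space X N \<and>
     (\<exists>C>0. \<forall>f\<in>X. \<forall>A::nat set.
        (\<lambda>k. indicator A k * f k) \<in> X \<and> N (\<lambda>k. indicator A k * f k) \<le> C * N f)"

definition canon_seq :: "nat \<Rightarrow> nat \<Rightarrow> real" ("e\<^sub>_") where
  "canon_seq n = (\<lambda>k. if k = n then 1 else 0)"

definition seq_span :: "(nat \<Rightarrow> nat \<Rightarrow> real) \<Rightarrow> (nat \<Rightarrow> real) set" where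
  "seq_span E = {(\<lambda>k. \<Sum>n\<in>F. c n * E n k) | F c. finite F}"

definition seq_closure :: "(nat \<Rightarrow> real) set \<Rightarrow> ((nat \<Rightarrow> real) \<Rightarrow> real) \<Rightarrow> (nat \<Rightarrow> real) set \<Rightarrow> (nat \<Rightarrow> real) set" where
  "seq_closure X N S = {x\<in>X. \<exists>s. (\<forall>m. s m \<in> S) \<and> norm_conv N s x}"

definition partial_sums :: "(nat \<Rightarrow> real) \<Rightarrow> (nat \<Rightarrow> nat \<Rightarrow> real) \<Rightarrow> nat \<Rightarrow> nat \<Rightarrow> real" where
  "partial_sums a E = (\<lambda>m k. \<Sum>n<m. a n * E n k)"

definition schauder_basis :: "((nat \<Rightarrow> real) \<Rightarrow> real) \<Rightarrow> (nat \<Rightarrow> nat \<Rightarrow> real) \<Rightarrow> (nat \<Rightarrow> real) set \<Rightarrow> bool" where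
  "schauder_basis N E Y \<longleftrightarrow> (\<forall>n. E n \<in> Y) \<and>
     (\<forall>x\<in>Y. \<exists>!a. norm_conv N (partial_sums a E) x)"

definition unconditional_basis :: "(nat \<Rightarrow> real) set \<Rightarrow> ((nat \<Rightarrow> real) \<Rightarrow> real) \<Rightarrow> (nat \<Rightarrow> nat \<Rightarrow> real) \<Rightarrow> (nat \<Rightarrow> real) set \<Rightarrow> bool" where
  "unconditional_basis X N E Y \<longleftrightarrow> schauder_basis N E Y \<and>
     (\<forall>x\<in>Y. \<forall>a. norm_conv N (partial_sums a E) x \<longrightarrow>
        (\<forall>\<pi>. bij \<pi> \<longrightarrow> (\<exists>y\<in>X. norm_conv N (partial_sums (a \<circ> \<pi>) (E \<circ> \<pi>)) y)))"

end

theory Submission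
  imports Defs
begin

text \<open>A sequence space has the sequences themselves as coordinates, so the only candidate
  expansion of \<open>x\<close> in the canonical sequences is \<open>\<Sum> x n e\<^sub>n\<close>, and a (rearranged) partial sum
  of it is \<open>\<chi>\<^sub>A x\<close> for a finite set \<open>A\<close>. If \<open>s\<close> is a finitely supported sequence close to \<open>x\<close>
  and \<open>A\<close> contains its support, then \<open>\<chi>\<^sub>A x - x = \<chi>\<^bsub>-A\<^esub> (s - x)\<close>, whose norm is at most
  \<open>C \<parallel>s - x\<parallel>\<close> by the rectangular bound; so \<open>\<chi>\<^sub>A x \<rightarrow> x\<close> along any sequence of sets exhausting
  \<open>\<nat>\<close>, in particular along every rearrangement. Uniqueness of the coefficients holds since
  coordinates are continuous: \<open>\<bar>f k\<bar> \<parallel>e\<^sub>k\<parallel> = \<parallel>\<chi>\<^bsub>{k}\<^esub> f\<parallel> \<le> C \<parallel>f\<parallel>\<close>.\<close>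

lemma
  assumes "normed_seq_space X N" "f \<in> X"
  shows normed_seq_space_add: "g \<in> X \<Longrightarrow> (\<lambda>k. f k + g k) \<in> X"
    and normed_seq_space_scale: "(\<lambda>k. c * f k) \<in> X"
    and normed_seq_space_norm_nonneg: "0 \<le> N f"
    and normed_seq_space_norm_scale: "N (\<lambda>k. c * f k) = \<bar>c\<bar> * N f"
  using assms unfolding normed_seq_space_def by blast+

lemma normed_seq_space_diff:
  assumes "normed_seq_space X N" "f \<in> X" "g \<in> X"
  shows "(\<lambda>k. f k - g k) \<in> X"
  using normed_seq_space_add[OF assms(1,2) normed_seq_space_scale[OF assms(1,3), where c = "-1"]] by simp

lemma seq_span_subset:
  assumes "normed_seq_space X N" "\<And>n. E n \<in> X"
  shows "seq_span E \<subseteq> X"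
proof
  fix s assume "s \<in> seq_span E"
  then obtain F c where s: "s = (\<lambda>k. \<Sum>n\<in>F. c n * E n k)" and "finite F"
    unfolding seq_span_def by blast
  have "(\<lambda>k. \<Sum>n\<in>F. c n * E n k) \<in> X"
    using \<open>finite F\<close>
  proof (induction F rule: finite_induct)
    case empty
    then show ?case using assms(1) unfolding normed_seq_space_def by simp
  next
    case (insert n F)
    have "(\<lambda>k. c n * E n k + (\<Sum>n\<in>F. c n * E n k)) \<in> X"
      using normed_seq_space_add[OF assms(1) normed_seq_space_scale[OF assms(1,2)] insert.IH] .
    with insert.hyps show ?case by simp
  qed
  with s show "s \<in> X" by simp
qed

lemma partial_sums_in_seq_span: "partial_sums a E m \<in> seq_span E"
  unfolding partial_sums_def seq_span_def by blast

lemma seq_span_subset_seq_closure: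
  assumes "normed_seq_space X N" "S \<subseteq> X"
  shows "S \<subseteq> seq_closure X N S"
proof
  fix s assume "s \<in> S"
  have "N (\<lambda>k. 0) = 0"
    using assms(1) unfolding normed_seq_space_def by blast
  then have "norm_conv N (\<lambda>m. s) s"
    unfolding norm_conv_def by simp
  with \<open>s \<in> S\<close> assms(2) show "s \<in> seq_closure X N S"
    unfolding seq_closure_def by (auto intro!: exI[of _ "\<lambda>m. s"])
qed

lemma norm_canon_seq_pos:
  assumes "normed_seq_space X N" "canon_seq k \<in> X"
  shows "N (canon_seq k) > 0"
proof -
  have "canon_seq k \<noteq> (\<lambda>j. 0)"
    by (metis canon_seq_def zero_neq_one)
  moreover have "0 \<le> N (canon_seq k)"
    by (rule normed_seq_space_norm_nonneg[OF assms])
  moreover have "N (canon_seq k) = 0 \<Longrightarrow> canon_seq k = (\<lambda>j. 0)"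
    using assms unfolding normed_seq_space_def by blast
  ultimately show ?thesis by fastforce
qed

lemma sum_mult_canon_seq:
  assumes "finite S"
  shows "(\<Sum>j\<in>S. a j * canon_seq j k) = indicator S k * a k"
proof -
  have "(\<Sum>j\<in>S. a j * canon_seq j k) = (\<Sum>j\<in>S. if j = k then a j else 0)"
    by (rule sum.cong) (auto simp: canon_seq_def)
  also have "\<dots> = indicator S k * a k"
    using assms by (simp add: sum.delta indicator_def)
  finally show ?thesis .
qed

lemma canon_seq_in_seq_span: "canon_seq n \<in> seq_span canon_seq"
proof -
  have "canon_seq n = (\<lambda>k. \<Sum>j\<in>{n}. 1 * canon_seq j k)"
    by simp
  then show ?thesis
    unfolding seq_span_def by (intro CollectI exI[of _ "{n}"] exI[of _ "\<lambda>_. 1"]) simp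
qed

lemma seq_span_canon_seq_eventually_zero:
  assumes "s \<in> seq_span canon_seq"
  obtains M where "\<And>k. M \<le> k \<Longrightarrow> s k = 0"
proof -
  obtain F c where s: "s = (\<lambda>k. \<Sum>n\<in>F. c n * canon_seq n k)" and "finite F"
    using assms unfolding seq_span_def by blast
  obtain M where "F \<subseteq> {..<M}"
    using \<open>finite F\<close> finite_nat_bounded by blast
  then have "s k = 0" if "M \<le> k" for k
    using that by (auto simp: s sum_mult_canon_seq[OF \<open>finite F\<close>] indicator_def)
  then show ?thesis by (rule that)
qed

lemma partial_sums_canon_seq_reindex:
  assumes "inj \<pi>"
  shows "partial_sums (a \<circ> \<pi>) (canon_seq \<circ> \<pi>) = (\<lambda>m k. indicator (\<pi> ` {..<m}) k * a k)"
proof (intro ext)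
  fix m k
  have "partial_sums (a \<circ> \<pi>) (canon_seq \<circ> \<pi>) m k = (\<Sum>j\<in>\<pi> ` {..<m}. a j * canon_seq j k)"
    unfolding partial_sums_def sum.reindex[OF inj_on_subset[OF assms subset_UNIV]] comp_def ..
  also have "\<dots> = indicator (\<pi> ` {..<m}) k * a k"
    by (rule sum_mult_canon_seq) simp
  finally show "partial_sums (a \<circ> \<pi>) (canon_seq \<circ> \<pi>) m k = indicator (\<pi> ` {..<m}) k * a k" .
qed

lemma partial_sums_canon_seq: "partial_sums a canon_seq = (\<lambda>m k. indicator {..<m} k * a k)"
  using partial_sums_canon_seq_reindex[of id a] by simp

lemma surj_imp_eventually_lessThan_subset_image:
  fixes \<pi> :: "nat \<Rightarrow> nat"
  assumes "surj \<pi>"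
  shows "\<forall>\<^sub>F m in sequentially. {..<M} \<subseteq> \<pi> ` {..<m}"
proof -
  obtain m0 where m0: "inv \<pi> ` {..<M} \<subseteq> {..<m0}"
    using finite_nat_bounded by blast
  have "{..<M} \<subseteq> \<pi> ` {..<m}" if "m0 \<le> m" for m
  proof
    fix j assume "j \<in> {..<M}"
    with m0 that have "inv \<pi> j \<in> {..<m}" by auto
    moreover have "\<pi> (inv \<pi> j) = j"
      using assms by (rule surj_f_inv_f)
    ultimately show "j \<in> \<pi> ` {..<m}" by (metis image_eqI)
  qed
  then show ?thesis by (rule eventually_sequentiallyI)
qed

locale rectangular_seq_space =
  fixes X :: "(nat \<Rightarrow> real) set" and N :: "(nat \<Rightarrow> real) \<Rightarrow> real" and C :: real
  assumes normed: "normed_seq_space X N"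
    and indicator_mult_mem: "f \<in> X \<Longrightarrow> (\<lambda>k. indicator A k * f k) \<in> X"
    and norm_indicator_mult_le: "f \<in> X \<Longrightarrow> N (\<lambda>k. indicator A k * f k) \<le> C * N f"

lemma banach_rectangular_seq_space_imp_rectangular:
  assumes "banach_rectangular_seq_space X N"
  obtains C where "rectangular_seq_space X N C"
  using assms unfolding banach_rectangular_seq_space_def rectangular_seq_space_def by metis

context rectangular_seq_space
begin

lemma abs_coordinate_le:
  assumes "f \<in> X" "canon_seq k \<in> X"
  shows "\<bar>f k\<bar> * N (canon_seq k) \<le> C * N f"
proof -
  have "(\<lambda>j. indicator {k} j * f j) = (\<lambda>j. f k * canon_seq k j)"
    unfolding canon_seq_def indicator_def by auto
  moreover have "N (\<lambda>j. f k * canon_seq k j) = \<bar>f k\<bar> * N (canon_seq k)"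
    using normed_seq_space_norm_scale[OF normed assms(2)] .
  ultimately show ?thesis
    using norm_indicator_mult_le[OF assms(1), of "{k}"] by simp
qed

lemma norm_conv_imp_coordinate_tendsto:
  assumes "\<And>m. s m \<in> X" "x \<in> X" "canon_seq k \<in> X" "norm_conv N s x"
  shows "(\<lambda>m. s m k) \<longlonglongrightarrow> x k"
proof -
  have pos: "N (canon_seq k) > 0"
    using norm_canon_seq_pos[OF normed assms(3)] .
  have "\<forall>m. norm (s m k - x k) \<le> C * N (\<lambda>j. s m j - x j) / N (canon_seq k)"
    unfolding real_norm_def pos_le_divide_eq[OF pos]
    using abs_coordinate_le[OF normed_seq_space_diff[OF normed assms(1,2)] assms(3)] by blast
  moreover have "(\<lambda>m. C * N (\<lambda>j. s m j - x j) / N (canon_seq k)) \<longlonglongrightarrow> 0"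
    using assms(4) unfolding norm_conv_def by (intro tendsto_divide_zero tendsto_mult_right_zero)
  ultimately have "(\<lambda>m. s m k - x k) \<longlonglongrightarrow> 0"
    by (rule Lim_null_comparison[OF always_eventually])
  then show ?thesis by (rule LIM_zero_cancel)
qed

lemma partial_sums_canon_seq_coeffs_unique:
  assumes "x \<in> X" "\<And>n. canon_seq n \<in> X" "norm_conv N (partial_sums a canon_seq) x"
  shows "a = x"
proof
  fix k
  have "\<And>m. partial_sums a canon_seq m \<in> X"
    using seq_span_subset[where E = canon_seq, OF normed assms(2)] partial_sums_in_seq_span
    by blast
  from norm_conv_imp_coordinate_tendsto[OF this assms]
  have "(\<lambda>m. partial_sums a canon_seq m k) \<longlonglongrightarrow> x k" .
  moreover have "\<forall>\<^sub>F m in sequentially. partial_sums a canon_seq m k = a k"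
    by (rule eventually_sequentiallyI[of "Suc k"]) (simp add: partial_sums_canon_seq)
  ultimately have "(\<lambda>m. a k) \<longlonglongrightarrow> x k"
    by (rule Lim_transform_eventually)
  then show "a k = x k"
    by (simp add: LIMSEQ_const_iff)
qed

lemma norm_conv_indicator_mult:
  assumes "\<And>n. canon_seq n \<in> X" "x \<in> seq_closure X N (seq_span canon_seq)"
    and exhausting: "\<And>M. \<forall>\<^sub>F m in sequentially. {..<M} \<subseteq> A m"
  shows "norm_conv N (\<lambda>m k. indicator (A m) k * x k) x"
  unfolding norm_conv_def
proof (rule LIMSEQ_I)
  fix r :: real assume "r > 0"
  obtain s where s: "\<And>j. s j \<in> seq_span canon_seq" and "norm_conv N s x" and "x \<in> X"
    using assms(2) unfolding seq_closure_def by blast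
  from \<open>norm_conv N s x\<close> have "(\<lambda>j. C * N (\<lambda>k. s j k - x k)) \<longlonglongrightarrow> 0"
    unfolding norm_conv_def by (rule tendsto_mult_right_zero)
  then have "\<forall>\<^sub>F j in sequentially. C * N (\<lambda>k. s j k - x k) < r"
    using \<open>r > 0\<close> by (rule order_tendstoD)
  then obtain j where j: "C * N (\<lambda>k. s j k - x k) < r"
    by (auto simp: eventually_sequentially)
  obtain M where M: "\<And>k. M \<le> k \<Longrightarrow> s j k = 0"
    using seq_span_canon_seq_eventually_zero[OF s] by blast
  have diff_mem: "(\<lambda>k. s j k - x k) \<in> X"
    using normed_seq_space_diff[OF normed _ \<open>x \<in> X\<close>]
      seq_span_subset[where E = canon_seq, OF normed assms(1)] s
    by blast
  have "norm (N (\<lambda>k. indicator (A m) k * x k - x k) - 0) < r"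
    if "{..<M} \<subseteq> A m" for m
  proof -
    have "indicator (A m) k * x k - x k = indicator (- A m) k * (s j k - x k)" for k
    proof (cases "k \<in> A m")
      case False
      with that have "M \<le> k" by (meson lessThan_iff not_le subsetD)
      with False M show ?thesis by simp
    qed simp
    then have "(\<lambda>k. indicator (A m) k * x k - x k) = (\<lambda>k. indicator (- A m) k * (s j k - x k))"
      by (rule ext)
    moreover have "0 \<le> N (\<lambda>k. indicator (- A m) k * (s j k - x k))"
      by (rule normed_seq_space_norm_nonneg[OF normed indicator_mult_mem[OF diff_mem]])
    ultimately show ?thesis
      using norm_indicator_mult_le[OF diff_mem, of "- A m"] j by simp
  qed
  then show "\<exists>m0. \<forall>m\<ge>m0. norm (N (\<lambda>k. indicator (A m) k * x k - x k) - 0) < r"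
    using exhausting[of M] unfolding eventually_sequentially by blast
qed

theorem unconditional_basis_canon_seq:
  assumes canon: "\<And>n. canon_seq n \<in> X"
  shows "unconditional_basis X N canon_seq (seq_closure X N (seq_span canon_seq))"
proof -
  let ?Y = "seq_closure X N (seq_span canon_seq)"
  have Y_subset: "?Y \<subseteq> X"
    unfolding seq_closure_def by blast
  have rearranged: "norm_conv N (partial_sums (x \<circ> \<pi>) (canon_seq \<circ> \<pi>)) x"
    if "x \<in> ?Y" "bij \<pi>" for x \<pi>
  proof -
    have "\<And>M. \<forall>\<^sub>F m in sequentially. {..<M} \<subseteq> \<pi> ` {..<m}"
      using \<open>bij \<pi>\<close> by (simp add: bij_is_surj surj_imp_eventually_lessThan_subset_image)
    from norm_conv_indicator_mult[OF canon \<open>x \<in> ?Y\<close> this] show ?thesis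
      using \<open>bij \<pi>\<close> by (simp add: bij_is_inj partial_sums_canon_seq_reindex)
  qed
  have unique: "a = x" if "x \<in> ?Y" "norm_conv N (partial_sums a canon_seq) x" for x a
    using partial_sums_canon_seq_coeffs_unique[OF _ canon that(2)] that(1) Y_subset by blast
  show ?thesis
    unfolding unconditional_basis_def schauder_basis_def
  proof (intro conjI allI ballI impI)
    fix n
    show "canon_seq n \<in> ?Y"
      using seq_span_subset_seq_closure[OF normed seq_span_subset[where E = canon_seq, OF normed canon]]
        canon_seq_in_seq_span
      by blast
  next
    fix x assume "x \<in> ?Y"
    show "\<exists>!a. norm_conv N (partial_sums a canon_seq) x"
      using rearranged[OF \<open>x \<in> ?Y\<close> bij_id] unique[OF \<open>x \<in> ?Y\<close>] by auto
  next
    fix x a and \<pi> :: "nat \<Rightarrow> nat"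
    assume "x \<in> ?Y" "norm_conv N (partial_sums a canon_seq) x" "bij \<pi>"
    then have "a = x"
      using unique by blast
    then show "\<exists>y\<in>X. norm_conv N (partial_sums (a \<circ> \<pi>) (canon_seq \<circ> \<pi>)) y"
      using rearranged[OF \<open>x \<in> ?Y\<close> \<open>bij \<pi>\<close>] \<open>x \<in> ?Y\<close> Y_subset
      by (intro bexI[of _ x]) auto
  qed
qed

end

theorem proposition4p7:
  fixes \<mu> :: "nat measure" and X :: "(nat \<Rightarrow> real) set" and N :: "(nat \<Rightarrow> real) \<Rightarrow> real"
  assumes "space \<mu> = UNIV" and "sets \<mu> = Pow UNIV"
    and "finite_measure \<mu>"
    and "\<forall>n. emeasure \<mu> {n} > 0"
    and "banach_rectangular_seq_space X N"
    and "\<forall>n. canon_seq n \<in> X"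
  shows "unconditional_basis X N canon_seq (seq_closure X N (seq_span canon_seq))"
proof -
  obtain C where "rectangular_seq_space X N C"
    using banach_rectangular_seq_space_imp_rectangular[OF assms(5)] .
  then show ?thesis
    using assms(6) by (simp add: rectangular_seq_space.unconditional_basis_canon_seq)
qed

end
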